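(* Let $(S_n^{(1)},S_n^{(2)})_{n\ge0}$ be a two-elephant walking model and let $\hat\beta_n:=\frac{2}{n(n-1)}$ for $n\ge2$. (i) If $\alpha_1=\alpha_2=-1$ (so $\lambda_\alpha=-1$, $r_\alpha=1$), then $(x_n)_{n\ge1}$ is a bounded martingale with respect to $(\mathcal F_n)$ and hence converges almost surely; moreover for $n\ge2$, $$y_n=\hat\beta_n\Big(y_2+\sum_{j=2}^{n-1}j\,\varepsilon^{(y)}_{j+1}\Big).$$ (ii) If $\alpha_1=\alpha_2=1$ (so $\lambda_\alpha=1$, $r_\alpha=1$), then $(y_n)_{n\ge1}$ is a bounded martingale with respect to $(\mathcal F_n)$ and hence converges almost surely; moreover for $n\ge2$, $$x_n=\hat\beta_n\Big(x_2+\sum_{j=2}^{n-1}j\,\varepsilon^{(x)}_{j+1}\Big).$$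
   Context: Two-elephant walking model: fix $p_1,p_2\in[0,1]$, $\alpha_i=2p_i-1$. Let $(\xi_n^{(1)})_{n\ge2}$ be i.i.d. Bernoulli($p_1$), $(\xi_n^{(2)})_{n\ge2}$ i.i.d. Bernoulli($p_2$), $(u_n^{(1)})_{n\ge1}$, $(u_n^{(2)})_{n\ge1}$ independent with $u_n^{(i)}$ uniform on $\{1,\dots,n\}$, all mutually independent. $S_0^{(i)}=0$, $X_1^{(1)},X_1^{(2)}\in\{-1,1\}$ given, and for $n\ge1$: $X_{n+1}^{(1)}:=(2\xi^{(1)}_{n+1}-1)X^{(2)}_{u_n^{(2)}}$, $X_{n+1}^{(2)}:=(2\xi^{(2)}_{n+1}-1)X^{(1)}_{u_n^{(1)}}$, $S_n^{(i)}=\sum_{k\le n}X_k^{(i)}$; $\mathcal F_n:=\sigma(X_j^{(i)}:1\le j\le n,\ i=1,2)$. With $\lambda_\alpha:=\operatorname{sgn}(\alpha_2)\sqrt{\alpha_1\alpha_2}$ and $r_\alpha:=\sqrt{\alpha_1/\alpha_2}$ (here $\alpha_1\alpha_2>0$): $x_n:=\frac{S_n^{(1)}-r_\alpha S_n^{(2)}}{n}$, $y_n:=\frac{S_n^{(1)}+r_\alpha S_n^{(2)}}{n}$, and for $j\ge1$, whenever the denominators are nonzero, $$\varepsilon^{(x)}_{j+1}:=\frac{1}{1+\lambda_\alpha}\big(X^{(1)}_{j+1}-r_\alpha X^{(2)}_{j+1}+\lambda_\alpha x_j\big),\qquad \varepsilon^{(y)}_{j+1}:=\frac{1}{1-\lambda_\alpha}\big(X^{(1)}_{j+1}+r_\alpha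 X^{(2)}_{j+1}-\lambda_\alpha y_j\big).$$ *)

theory Defs
  imports "HOL-Probability.Probability"
begin

text \<open>Elephants are indexed by 1 and 2 (the partner of i is 3 - i).
  e i n : the Bernoulli variable xi_n^(i) (True means 1);
  v i n : the uniform index u_n^(i);
  a i   : the given first step X_1^(i).
  The index v i n is clamped to {1..n}; this only matters on a null set,
  since u_n^(i) is uniform on {1..n}.\<close>

fun ew :: "(nat \<Rightarrow> nat \<Rightarrow> bool) \<Rightarrow> (nat \<Rightarrow> nat \<Rightarrow> nat) \<Rightarrow> (nat \<Rightarrow> real) \<Rightarrow> nat \<Rightarrow> nat \<Rightarrow> real" where
  "ew e v a i 0 = 0"
| "ew e v a i (Suc 0) = a i"
| "ew e v a i (Suc (Suc m)) =
     (2 * of_bool (e i (Suc (Suc m))) - 1) *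
     ew e v a (3 - i) (max 1 (min (v (3 - i) (Suc m)) (Suc m)))"

definition lam_alpha :: "real \<Rightarrow> real \<Rightarrow> real" where
  "lam_alpha a1 a2 = sgn a2 * sqrt (a1 * a2)"

definition r_alpha :: "real \<Rightarrow> real \<Rightarrow> real" where
  "r_alpha a1 a2 = sqrt (a1 / a2)"

definition martingale_wrt :: "'a measure \<Rightarrow> (nat \<Rightarrow> 'a measure) \<Rightarrow> (nat \<Rightarrow> 'a \<Rightarrow> real) \<Rightarrow> bool" where
  "martingale_wrt M F X \<longleftrightarrow>
     (\<forall>n\<ge>1. subalgebra M (F n) \<and> sets (F n) \<subseteq> sets (F (Suc n)) \<and>
            X n \<in> borel_measurable (F n) \<and> integrable M (X n) \<and>
            (AE \<omega> in M. real_cond_exp M (F n) (X (Suc n)) \<omega> = X n \<omega>))"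

end

(*
  For alpha_1 = alpha_2 = s with s = 1 or s = -1 the coins are almost surely constant, so
  X^(i)_(m+1) = s X^(3-i)_u with u uniform on {1..m} and independent of everything that
  determines the walk up to time m.  Hence the conditional mean of X^(i)_(m+1) given the past
  is s S^(3-i)_m / m, and W_n = (S^(1)_n + s S^(2)_n) / n (which is x_n for s = -1 and y_n
  for s = 1) is a martingale.  It is bounded by 2 and moves by at most 4 / n per step, so
  orthogonality of its increments gives E (W_m - W_n)^2 <= 16 (m - n) / n^2; along the cubes
  n = k^3 this makes the increments absolutely summable almost surely, and the step bound
  controls W between consecutive cubes.  The formula for the other combination is an exact
  telescoping identity.
*)
theory Submission
  imports Defs
begin

lemma abs_ew_eq_1:
  assumes "\<forall>i\<in>{1,2}. a i \<in> {-1, 1}"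
  shows "i \<in> {1,2} \<Longrightarrow> 1 \<le> n \<Longrightarrow> \<bar>ew e v a i n\<bar> = 1"
  using assms by (induction e v a i n rule: ew.induct) (auto simp: abs_mult)

lemma average_eq_weighted_sum:
  fixes T D :: "nat \<Rightarrow> real"
  assumes T_Suc: "\<And>n. T (Suc n) = T n + D (Suc n)" and n: "2 \<le> n"
  shows "T n / n = 2 / (real n * (real n - 1)) *
           (T 2 / 2 + (\<Sum>j=2..n-1. real j * ((D (Suc j) + T j / j) / 2)))"
proof -
  have "(real n - 1) * T n / 2 = T 2 / 2 + (\<Sum>j=2..n-1. real j * ((D (Suc j) + T j / j) / 2))"
    using n
  proof (induction n rule: nat_induct_at_least)
    case (Suc n)
    have insert: "{2..Suc n - 1} = insert n {2..n-1}" using Suc.hyps by auto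
    have "real n * T (Suc n) / 2 = (real n - 1) * T n / 2 + real n * ((D (Suc n) + T n / n) / 2)"
      using Suc.hyps by (simp add: T_Suc field_simps)
    moreover have "n \<notin> {2..n-1}" using Suc.hyps by auto
    ultimately show ?case unfolding insert using Suc.IH by simp
  qed simp
  with n show ?thesis by (simp add: field_simps)
qed

lemma abs_average_diff_le:
  fixes T :: "nat \<Rightarrow> real"
  assumes m: "1 \<le> m" "m \<le> n"
    and T_m: "\<bar>T m\<bar> \<le> c * real m" and T_diff: "\<bar>T n - T m\<bar> \<le> c * (real n - real m)"
  shows "\<bar>T n / real n - T m / real m\<bar> \<le> 2 * c * (real n - real m) / real m"
proof -
  have pos: "0 < real m" "real m \<le> real n" using m by auto
  have "0 \<le> c * real m" using T_m abs_ge_zero order_trans by blast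
  then have c: "0 \<le> c" using pos by (simp add: zero_le_mult_iff)
  have "T n / real n - T m / real m = (T n - T m) / real n - T m / real m * ((real n - real m) / real n)"
    using pos by (simp add: field_simps)
  also have "\<bar>\<dots>\<bar> \<le> \<bar>(T n - T m) / real n\<bar> + \<bar>T m / real m * ((real n - real m) / real n)\<bar>"
    by (rule abs_triangle_ineq4)
  also have "\<dots> = \<bar>T n - T m\<bar> / real n + \<bar>T m\<bar> / real m * ((real n - real m) / real n)"
    using pos by (simp add: abs_mult)
  also have "\<dots> \<le> c * (real n - real m) / real n + c * ((real n - real m) / real n)"
    using pos T_m T_diff
    by (intro add_mono divide_right_mono mult_right_mono) (simp_all add: divide_le_eq)
  also have "\<dots> = 2 * c * (real n - real m) / real n"
    by simp
  also have "\<dots> \<le> 2 * c * (real n - real m) / real m"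
    using pos c by (intro divide_left_mono) auto
  finally show ?thesis .
qed

lemma cube_bracket:
  assumes "1 \<le> (n::nat)"
  obtains k where "(k+1)^3 \<le> n" "n < (k+2)^3"
proof -
  define k where "k = (LEAST k. n < (k+2)^3)"
  have "n < (n+2)^3"
    using power_increasing[of 1 3 "n+2"] by simp
  then have "n < (k+2)^3"
    unfolding k_def by (rule LeastI)
  moreover have "(k+1)^3 \<le> n"
  proof (cases k)
    case (Suc k')
    then have "\<not> n < (k'+2)^3"
      using not_less_Least[of k' "\<lambda>k. n < (k+2)^3"] unfolding k_def by simp
    with Suc show ?thesis by simp
  qed (use assms in simp)
  ultimately show thesis using that by blast
qed

lemma cube_gap: "real n - real ((k+1)^3) \<le> 7 * (real k + 1)^2" if "n \<le> (k+2)^3"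
proof -
  have "real n \<le> real ((k+2)^3)" using that by linarith
  moreover have "real ((k+2)^3) - real ((k+1)^3) = 3 * (real k + 1)^2 + 3 * (real k + 1) + 1"
    by (simp add: power3_eq_cube power2_eq_square algebra_simps)
  moreover have "3 * (real k + 1) + 1 \<le> 4 * (real k + 1)^2"
    by (simp add: power2_eq_square algebra_simps)
  ultimately show ?thesis by linarith
qed

lemma abs_diff_cube_le:
  fixes w :: "nat \<Rightarrow> real"
  assumes C: "0 \<le> C"
    and osc: "\<And>m n. 1 \<le> m \<Longrightarrow> m \<le> n \<Longrightarrow> \<bar>w n - w m\<bar> \<le> C * (real n - real m) / real m"
    and n: "(k+1)^3 \<le> n" "n < (k+2)^3"
  shows "\<bar>w n - w ((k+1)^3)\<bar> \<le> 7 * C / (real k + 1)"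
proof -
  define r where "r = real k + 1"
  have "r > 0" unfolding r_def by simp
  have cube: "real ((k+1)^3) = r^3" unfolding r_def by (simp add: add.commute)
  have "\<bar>w n - w ((k+1)^3)\<bar> \<le> C * (real n - real ((k+1)^3)) / real ((k+1)^3)"
    by (rule osc) (use n in auto)
  also have "\<dots> \<le> C * (7 * r^2) / r^3"
    unfolding cube r_def using cube_gap[OF less_imp_le[OF n(2)]] C
    by (intro divide_right_mono mult_left_mono) (auto simp: add.commute)
  also have "\<dots> = 7 * C / r"
    using \<open>r > 0\<close> by (simp add: power2_eq_square power3_eq_cube field_simps)
  finally show ?thesis unfolding r_def .
qed

lemma convergent_if_cube_increments_summable:
  fixes w :: "nat \<Rightarrow> real"
  assumes C: "0 \<le> C"
    and osc: "\<And>m n. 1 \<le> m \<Longrightarrow> m \<le> n \<Longrightarrow> \<bar>w n - w m\<bar> \<le> C * (real n - real m) / real m"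
    and summable: "summable (\<lambda>k. \<bar>w ((k+2)^3) - w ((k+1)^3)\<bar>)"
  shows "convergent w"
proof -
  define L where "L k = w ((k+1)^3)" for k
  have "summable (\<lambda>k. L (Suc k) - L k)"
    using summable_rabs_cancel[OF summable] by (simp add: L_def)
  then have "convergent (\<lambda>k. L 0 + (L k - L 0))"
    unfolding summable_iff_convergent sum_lessThan_telescope
    by (rule convergent_add_const_iff[THEN iffD2])
  then obtain l where L: "L \<longlonglongrightarrow> l"
    by (auto simp: convergent_def)
  show ?thesis
    unfolding convergent_def
  proof (intro exI[of _ l] LIMSEQ_I)
    fix e :: real assume e: "0 < e"
    obtain K1 where K1: "\<And>k. k \<ge> K1 \<Longrightarrow> norm (L k - l) < e / 2"
      using LIMSEQ_D[OF L, of "e / 2"] e by auto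
    obtain K2 :: nat where K2: "14 * C / e < real K2"
      using reals_Archimedean2 by blast
    define K where "K = max K1 K2"
    show "\<exists>n0. \<forall>n\<ge>n0. norm (w n - l) < e"
    proof (intro exI allI impI)
      fix n assume n: "(K+1)^3 \<le> n"
      then obtain k where k: "(k+1)^3 \<le> n" "n < (k+2)^3"
        by (meson cube_bracket le_add2 le_trans one_le_power)
      have "K + 1 < k + 2"
        using n k(2) by (metis le_less_trans power_less_imp_less_base zero_le)
      then have "K1 \<le> k" "K2 \<le> k" by (auto simp: K_def)
      have "7 * C / (real k + 1) < e / 2"
      proof -
        have "14 * C < e * real K2" using K2 e by (simp add: field_simps)
        also have "\<dots> \<le> e * (real k + 1)" using \<open>K2 \<le> k\<close> e by (intro mult_left_mono) auto
        finally show ?thesis using e by (simp add: field_simps)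
      qed
      then show "norm (w n - l) < e"
        using abs_diff_cube_le[OF C osc k] K1[OF \<open>K1 \<le> k\<close>] unfolding real_norm_def L_def by arith
    qed
  qed
qed

lemma (in prob_space) integrable_if_abs_bounded:
  fixes f :: "'a \<Rightarrow> real"
  shows "f \<in> borel_measurable M \<Longrightarrow> (\<And>\<omega>. \<omega> \<in> space M \<Longrightarrow> \<bar>f \<omega>\<bar> \<le> B) \<Longrightarrow> integrable M f"
  by (intro integrable_const_bound[where B=B] AE_I2) auto

lemma (in prob_space) integrable_mult_if_abs_bounded:
  fixes f g :: "'a \<Rightarrow> real"
  assumes "f \<in> borel_measurable M" "g \<in> borel_measurable M"
    and "\<And>\<omega>. \<omega> \<in> space M \<Longrightarrow> \<bar>f \<omega>\<bar> \<le> Bf" "\<And>\<omega>. \<omega> \<in> space M \<Longrightarrow> \<bar>g \<omega>\<bar> \<le> Bg"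
  shows "integrable M (\<lambda>\<omega>. f \<omega> * g \<omega>)"
proof (rule integrable_if_abs_bounded)
  show "(\<lambda>\<omega>. f \<omega> * g \<omega>) \<in> borel_measurable M" using assms(1,2) by measurable
  show "\<bar>f \<omega> * g \<omega>\<bar> \<le> Bf * Bg" if "\<omega> \<in> space M" for \<omega>
    unfolding abs_mult using assms(3,4)[OF that] by (intro mult_mono) auto
qed

lemma (in prob_space) expectation_sq_diff_le_if_orthogonal_increments:
  fixes W :: "nat \<Rightarrow> 'a \<Rightarrow> real" and N :: "nat \<Rightarrow> 'a measure"
  assumes subalg: "\<And>m. subalgebra M (N m)"
    and adapted: "\<And>k m. k \<le> m \<Longrightarrow> W k \<in> borel_measurable (N m)"
    and bounded: "\<And>k \<omega>. \<omega> \<in> space M \<Longrightarrow> \<bar>W k \<omega>\<bar> \<le> B"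
    and orth: "\<And>m Z K. n \<le> m \<Longrightarrow> Z \<in> borel_measurable (N m) \<Longrightarrow>
        (\<And>\<omega>. \<omega> \<in> space M \<Longrightarrow> \<bar>Z \<omega>\<bar> \<le> K) \<Longrightarrow>
        (\<integral>\<omega>. W (Suc m) \<omega> * Z \<omega> \<partial>M) = (\<integral>\<omega>. W m \<omega> * Z \<omega> \<partial>M)"
    and increment: "\<And>m \<omega>. n \<le> m \<Longrightarrow> \<omega> \<in> space M \<Longrightarrow> \<bar>W (Suc m) \<omega> - W m \<omega>\<bar> \<le> c"
    and "n \<le> m"
  shows "expectation (\<lambda>\<omega>. (W m \<omega> - W n \<omega>)^2) \<le> (real m - real n) * c^2"
  using \<open>n \<le> m\<close>
proof (induction m rule: dec_induct)
  case (step m)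
  have [measurable]: "W k \<in> borel_measurable M" for k
    by (rule measurable_from_subalg[OF subalg adapted[OF order_refl]])
  define Z where "Z \<omega> = W m \<omega> - W n \<omega>" for \<omega>
  define d where "d \<omega> = W (Suc m) \<omega> - W m \<omega>" for \<omega>
  have Z_N: "Z \<in> borel_measurable (N m)"
    unfolding Z_def[abs_def] using adapted[of m m] adapted[OF step.hyps(1)] by measurable
  have [measurable]: "Z \<in> borel_measurable M" "d \<in> borel_measurable M"
    unfolding Z_def[abs_def] d_def[abs_def] by measurable
  have Z_bound: "\<bar>Z \<omega>\<bar> \<le> 2 * B" if "\<omega> \<in> space M" for \<omega>
    using bounded[OF that, of m] bounded[OF that, of n] unfolding Z_def by linarith
  have d_bound: "\<bar>d \<omega>\<bar> \<le> c" if "\<omega> \<in> space M" for \<omega>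
    unfolding d_def using step.hyps(1) that by (rule increment)
  have d2_bound: "(d \<omega>)^2 \<le> c^2" if "\<omega> \<in> space M" for \<omega>
    using d_bound[OF that] by (metis abs_ge_zero power2_abs power_mono)
  have int_Z2: "integrable M (\<lambda>\<omega>. (Z \<omega>)^2)"
    unfolding power2_eq_square by (rule integrable_mult_if_abs_bounded) (use Z_bound in auto)
  have int_dZ: "integrable M (\<lambda>\<omega>. d \<omega> * Z \<omega>)"
    by (rule integrable_mult_if_abs_bounded) (use d_bound Z_bound in auto)
  have int_WZ: "integrable M (\<lambda>\<omega>. W k \<omega> * Z \<omega>)" for k
    by (rule integrable_mult_if_abs_bounded) (use bounded Z_bound in auto)
  have int_d2: "integrable M (\<lambda>\<omega>. (d \<omega>)^2)"
    unfolding power2_eq_square by (rule integrable_mult_if_abs_bounded) (use d_bound in auto)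
  have orthogonal: "expectation (\<lambda>\<omega>. d \<omega> * Z \<omega>) = 0"
  proof -
    have "expectation (\<lambda>\<omega>. d \<omega> * Z \<omega>) =
        expectation (\<lambda>\<omega>. W (Suc m) \<omega> * Z \<omega>) - expectation (\<lambda>\<omega>. W m \<omega> * Z \<omega>)"
      unfolding d_def left_diff_distrib by (rule Bochner_Integration.integral_diff[OF int_WZ int_WZ])
    also have "\<dots> = 0"
      using orth[OF step.hyps(1) Z_N Z_bound] by simp
    finally show ?thesis .
  qed
  have "expectation (\<lambda>\<omega>. (W (Suc m) \<omega> - W n \<omega>)^2) =
      expectation (\<lambda>\<omega>. (Z \<omega>)^2 + 2 * (d \<omega> * Z \<omega>) + (d \<omega>)^2)"
    by (rule Bochner_Integration.integral_cong) (auto simp: Z_def d_def power2_eq_square algebra_simps)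
  also have "\<dots> = expectation (\<lambda>\<omega>. (Z \<omega>)^2) + 2 * expectation (\<lambda>\<omega>. d \<omega> * Z \<omega>) + expectation (\<lambda>\<omega>. (d \<omega>)^2)"
    using int_Z2 int_dZ int_d2 by simp
  also have "\<dots> \<le> (real m - real n) * c^2 + c^2"
    using step.IH integral_le_const[OF int_d2, of "c^2"] d2_bound orthogonal
    unfolding Z_def by simp
  finally show ?case by (simp add: algebra_simps)
qed simp

lemma (in prob_space) AE_summable_if_summable_expectation:
  fixes f :: "nat \<Rightarrow> 'a \<Rightarrow> real"
  assumes integrable: "\<And>k. integrable M (f k)"
    and nonneg: "\<And>k \<omega>. 0 \<le> f k \<omega>"
    and summable: "summable (\<lambda>k. expectation (f k))"
  shows "AE \<omega> in M. summable (\<lambda>k. f k \<omega>)"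
proof -
  have [measurable]: "f k \<in> borel_measurable M" for k
    using integrable by simp
  have "(\<integral>\<^sup>+\<omega>. (\<Sum>k. ennreal (f k \<omega>)) \<partial>M) = (\<Sum>k. \<integral>\<^sup>+\<omega>. ennreal (f k \<omega>) \<partial>M)"
    by (rule nn_integral_suminf) simp
  also have "\<dots> = (\<Sum>k. ennreal (expectation (f k)))"
    by (intro suminf_cong nn_integral_eq_integral integrable AE_I2 nonneg)
  also have "\<dots> \<noteq> \<infinity>"
    unfolding infinity_ennreal_def
    by (rule ennreal_suminf_neq_top[OF summable]) (simp add: nonneg)
  finally have "AE \<omega> in M. (\<Sum>k. ennreal (f k \<omega>)) \<noteq> \<infinity>"
    by (intro nn_integral_PInf_AE) measurable
  then show ?thesis
  proof eventually_elim
    case (elim \<omega>)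
    show ?case
      by (rule summable_suminf_not_top) (use elim in \<open>simp_all add: nonneg\<close>)
  qed
qed

lemma (in prob_space) expectation_le_sqrt_expectation_sq:
  fixes f :: "'a \<Rightarrow> real"
  assumes "integrable M f" "integrable M (\<lambda>\<omega>. (f \<omega>)^2)"
  shows "expectation f \<le> sqrt (expectation (\<lambda>\<omega>. (f \<omega>)^2))"
  using variance_positive[of f] variance_eq[OF assms] by (intro real_le_rsqrt) simp

text \<open>A substitute for the martingale convergence theorem when the increments after time m
  are O(1/m): by Cauchy-Schwarz the L2 bound makes the increments along the cubes summable
  in L1, and the oscillation bound controls the gaps between cubes.\<close>
locale orthogonal_slow_increments = prob_space M for M :: "'a measure" +
  fixes W :: "nat \<Rightarrow> 'a \<Rightarrow> real" and N :: "nat \<Rightarrow> 'a measure" and B C :: real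
  assumes subalg: "\<And>m. subalgebra M (N m)"
    and adapted: "\<And>k m. k \<le> m \<Longrightarrow> W k \<in> borel_measurable (N m)"
    and bounded: "\<And>k \<omega>. \<omega> \<in> space M \<Longrightarrow> \<bar>W k \<omega>\<bar> \<le> B"
    and orth: "\<And>m Z K. 1 \<le> m \<Longrightarrow> Z \<in> borel_measurable (N m) \<Longrightarrow>
        (\<And>\<omega>. \<omega> \<in> space M \<Longrightarrow> \<bar>Z \<omega>\<bar> \<le> K) \<Longrightarrow>
        (\<integral>\<omega>. W (Suc m) \<omega> * Z \<omega> \<partial>M) = (\<integral>\<omega>. W m \<omega> * Z \<omega> \<partial>M)"
    and C: "0 \<le> C"
    and osc: "\<And>m n \<omega>. 1 \<le> m \<Longrightarrow> m \<le> n \<Longrightarrow> \<omega> \<in> space M \<Longrightarrow>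
        \<bar>W n \<omega> - W m \<omega>\<bar> \<le> C * (real n - real m) / real m"
begin

lemma borel_measurable_W [measurable]: "W k \<in> borel_measurable M"
  by (rule measurable_from_subalg[OF subalg adapted[OF order_refl]])

lemma expectation_sq_cube_increment_le:
  "expectation (\<lambda>\<omega>. (W ((k+2)^3) \<omega> - W ((k+1)^3) \<omega>)^2) \<le> 7 * C^2 / real (Suc k) ^ 4"
proof -
  define q where "q = real (Suc k) ^ 2"
  have q: "1 \<le> q" unfolding q_def by simp
  have one_cube: "1 \<le> (k+1)^3" by simp
  have cube: "real ((k+1)^3) ^ 2 = q ^ 3" unfolding q_def
    by (simp add: power_mult[symmetric] mult.commute)
  have "expectation (\<lambda>\<omega>. (W ((k+2)^3) \<omega> - W ((k+1)^3) \<omega>)^2)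
      \<le> (real ((k+2)^3) - real ((k+1)^3)) * (C / real ((k+1)^3))^2"
  proof (rule expectation_sq_diff_le_if_orthogonal_increments[OF subalg adapted bounded])
    fix m and Z :: "'a \<Rightarrow> real" and K :: real
    assume "(k+1)^3 \<le> m" "Z \<in> borel_measurable (N m)" "\<And>\<omega>. \<omega> \<in> space M \<Longrightarrow> \<bar>Z \<omega>\<bar> \<le> K"
    then show "expectation (\<lambda>\<omega>. W (Suc m) \<omega> * Z \<omega>) = expectation (\<lambda>\<omega>. W m \<omega> * Z \<omega>)"
      using le_trans[OF one_cube] by (intro orth) auto
  next
    fix m \<omega> assume m: "(k+1)^3 \<le> m" and \<omega>: "\<omega> \<in> space M"
    have "\<bar>W (Suc m) \<omega> - W m \<omega>\<bar> \<le> C * (real (Suc m) - real m) / real m"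
      using le_trans[OF one_cube m] \<omega> by (intro osc) auto
    also have "\<dots> = C / real m"
      by simp
    also have "\<dots> \<le> C / real ((k+1)^3)"
    proof (rule divide_left_mono)
      show "real ((k+1)^3) \<le> real m" using m by (simp only: of_nat_le_iff)
      show "0 < real m * real ((k+1)^3)" using le_trans[OF one_cube m] by simp
    qed (rule C)
    finally show "\<bar>W (Suc m) \<omega> - W m \<omega>\<bar> \<le> C / real ((k+1)^3)" .
  qed (simp_all add: power_mono)
  also have "\<dots> \<le> 7 * q * (C^2 / q^3)"
  proof (rule mult_mono)
    show "real ((k+2)^3) - real ((k+1)^3) \<le> 7 * q"
      using cube_gap[of "(k+2)^3" k] unfolding q_def by (simp add: add.commute)
    show "(C / real ((k+1)^3))^2 \<le> C^2 / q^3"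
      unfolding power_divide cube ..
  qed (use q in simp_all)
  also have "\<dots> = 7 * C^2 / q^2"
    using q by (simp add: power2_eq_square power3_eq_cube)
  also have "q^2 = real (Suc k) ^ 4"
    unfolding q_def by (simp flip: power_mult)
  finally show ?thesis .
qed

lemma expectation_abs_cube_increment_le:
  "expectation (\<lambda>\<omega>. \<bar>W ((k+2)^3) \<omega> - W ((k+1)^3) \<omega>\<bar>) \<le> sqrt 7 * C * inverse (real (Suc k) ^ 2)"
proof -
  define D where "D \<omega> = \<bar>W ((k+2)^3) \<omega> - W ((k+1)^3) \<omega>\<bar>" for \<omega>
  have D_bound: "\<bar>D \<omega>\<bar> \<le> 2 * B" if "\<omega> \<in> space M" for \<omega>
    using bounded[OF that, of "(k+2)^3"] bounded[OF that, of "(k+1)^3"] unfolding D_def by linarith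
  have int_D: "integrable M D"
    by (rule integrable_if_abs_bounded[OF _ D_bound]) (simp add: D_def)
  have int_D2: "integrable M (\<lambda>\<omega>. (D \<omega>)^2)"
    unfolding power2_eq_square
    by (rule integrable_mult_if_abs_bounded[OF _ _ D_bound D_bound]) (simp_all add: D_def)
  have "expectation D \<le> sqrt (expectation (\<lambda>\<omega>. (D \<omega>)^2))"
    by (rule expectation_le_sqrt_expectation_sq[OF int_D int_D2])
  also have "\<dots> \<le> sqrt (7 * C^2 / real (Suc k) ^ 4)"
    unfolding D_def power2_abs
    by (intro real_sqrt_le_mono expectation_sq_cube_increment_le)
  also have "7 * C^2 / real (Suc k) ^ 4 = (sqrt 7 * C * inverse (real (Suc k) ^ 2))^2"
    by (simp add: power_mult_distrib power_inverse divide_inverse flip: power_mult)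
  also have "sqrt \<dots> = sqrt 7 * C * inverse (real (Suc k) ^ 2)"
    using C by simp
  finally show ?thesis
    unfolding D_def .
qed

lemma AE_convergent: "AE \<omega> in M. convergent (\<lambda>n. W n \<omega>)"
proof -
  define D where "D k \<omega> = \<bar>W ((k+2)^3) \<omega> - W ((k+1)^3) \<omega>\<bar>" for k \<omega>
  have D_bound: "\<bar>D k \<omega>\<bar> \<le> 2 * B" if "\<omega> \<in> space M" for k \<omega>
    using bounded[OF that, of "(k+2)^3"] bounded[OF that, of "(k+1)^3"] unfolding D_def by linarith
  have int_D: "integrable M (D k)" for k
    by (rule integrable_if_abs_bounded[OF _ D_bound]) (simp add: D_def)
  have "summable (\<lambda>k. sqrt 7 * C * inverse (real (Suc k) ^ 2))"
  proof -
    have "summable (\<lambda>k. inverse (real k ^ 2))"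
      by (rule inverse_power_summable) simp
    then have "summable (\<lambda>k. inverse (real (Suc k) ^ 2))"
      by (subst summable_Suc_iff)
    then show ?thesis
      by (rule summable_mult)
  qed
  moreover have "norm (expectation (D k)) \<le> sqrt 7 * C * inverse (real (Suc k) ^ 2)" for k
  proof -
    have "norm (expectation (D k)) = expectation (D k)"
      by (simp add: D_def)
    also have "\<dots> \<le> sqrt 7 * C * inverse (real (Suc k) ^ 2)"
      unfolding D_def by (rule expectation_abs_cube_increment_le)
    finally show ?thesis .
  qed
  ultimately have summable_E: "summable (\<lambda>k. expectation (D k))"
    by (rule summable_comparison_test'[where N=0])
  have "AE \<omega> in M. summable (\<lambda>k. D k \<omega>)"
    by (rule AE_summable_if_summable_expectation[OF int_D _ summable_E]) (simp add: D_def)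
  then show ?thesis
    using AE_space
  proof eventually_elim
    case (elim \<omega>)
    show ?case
      by (rule convergent_if_cube_increments_summable[OF C osc[OF _ _ elim(2)]])
        (use elim(1) in \<open>simp_all add: D_def\<close>)
  qed
qed

end

definition driver_index :: "(bool \<times> nat \<times> nat) set" where
  "driver_index = ({True} \<times> {1,2} \<times> {2..}) \<union> ({False} \<times> {1,2} \<times> {1..})"

definition drivers_upto :: "nat \<Rightarrow> (bool \<times> nat \<times> nat) set" where
  "drivers_upto m = ({True} \<times> {1,2} \<times> {2..m}) \<union> ({False} \<times> {1,2} \<times> {1..m-1})"

abbreviation clamp :: "nat \<Rightarrow> nat \<Rightarrow> nat" where
  "clamp m k \<equiv> max 1 (min k m)"

locale two_elephant_walk = prob_space M for M :: "'a measure" +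
  fixes xi :: "nat \<Rightarrow> nat \<Rightarrow> 'a \<Rightarrow> bool" and u :: "nat \<Rightarrow> nat \<Rightarrow> 'a \<Rightarrow> nat"
    and a :: "nat \<Rightarrow> real"
    and X :: "nat \<Rightarrow> nat \<Rightarrow> 'a \<Rightarrow> real" and S :: "nat \<Rightarrow> nat \<Rightarrow> 'a \<Rightarrow> real"
    and F :: "nat \<Rightarrow> 'a measure"
  assumes a: "\<forall>i\<in>{1,2}. a i \<in> {-1, 1}"
    and indep: "indep_vars (\<lambda>_. count_space UNIV)
        (\<lambda>k \<omega>. case k of (True, i, n) \<Rightarrow> Inl (xi i n \<omega>) | (False, i, n) \<Rightarrow> Inr (u i n \<omega>))
        (({True} \<times> {1,2} \<times> {2..}) \<union> ({False} \<times> {1,2} \<times> {1..}))"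
    and u_distr: "\<forall>i\<in>{1,2}. \<forall>n\<ge>1.
        distr M (count_space UNIV) (u i n) = measure_pmf (pmf_of_set {1..n})"
    and X_def: "\<And>i n \<omega>. X i n \<omega> = ew (\<lambda>i n. xi i n \<omega>) (\<lambda>i n. u i n \<omega>) a i n"
    and S_def: "\<And>i n \<omega>. S i n \<omega> = (\<Sum>k=1..n. X i k \<omega>)"
    and F_def: "\<And>n. F n = sigma (space M)
        (\<Union>i\<in>{1,2}. \<Union>j\<in>{1..n}. {X i j -` A \<inter> space M | A. A \<in> sets borel})"
begin

definition driver :: "bool \<times> nat \<times> nat \<Rightarrow> 'a \<Rightarrow> bool + nat" where
  "driver = (\<lambda>k \<omega>. case k of (True, i, n) \<Rightarrow> Inl (xi i n \<omega>) | (False, i, n) \<Rightarrow> Inr (u i n \<omega>))"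

definition driver_events :: "bool \<times> nat \<times> nat \<Rightarrow> 'a set set" where
  "driver_events k = {driver k -` A \<inter> space M | A. A \<in> sets (count_space UNIV)}"

text \<open>The steps up to time m are functions of the coins xi_n (n \<le> m) and the choices u_n
  (n < m).  The \<sigma>-algebra these generate contains F m, and the next choice u_m is independent
  of it, which is what lets us average X_(m+1) against history-measurable weights.\<close>
definition history :: "nat \<Rightarrow> 'a measure" where
  "history m = sigma (space M) (\<Union>k\<in>drivers_upto m. driver_events k)"

lemma indep_drivers: "indep_vars (\<lambda>_. count_space UNIV) driver driver_index"
  using indep unfolding driver_def driver_index_def .

lemma measurable_driver: "k \<in> driver_index \<Longrightarrow> driver k \<in> measurable M (count_space UNIV)"
  using indep_drivers unfolding indep_vars_def2 by auto

lemma measurable_xi: "i \<in> {1,2} \<Longrightarrow> 2 \<le> n \<Longrightarrow> xi i n \<in> measurable M (count_space UNIV)"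
proof -
  assume "i \<in> {1,2}" "2 \<le> n"
  then have "(True, i, n) \<in> driver_index" by (simp add: driver_index_def)
  from measurable_compose[OF measurable_driver[OF this], of "case_sum id (\<lambda>_. False)"]
  show ?thesis by (simp add: driver_def)
qed

lemma measurable_u: "i \<in> {1,2} \<Longrightarrow> 1 \<le> n \<Longrightarrow> u i n \<in> measurable M (count_space UNIV)"
proof -
  assume "i \<in> {1,2}" "1 \<le> n"
  then have "(False, i, n) \<in> driver_index" by (simp add: driver_index_def)
  from measurable_compose[OF measurable_driver[OF this], of "case_sum (\<lambda>_. 0) id"]
  show ?thesis by (simp add: driver_def)
qed

lemma driver_events_subset: "driver_events k \<subseteq> Pow (space M)"
  unfolding driver_events_def by auto

lemma driver_events_subset_sets:
  assumes "k \<in> driver_index" shows "driver_events k \<subseteq> sets M"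
  unfolding driver_events_def using measurable_sets[OF measurable_driver[OF assms]] by auto

lemma space_history [simp]: "space (history m) = space M"
  unfolding history_def by (rule space_measure_of) (use driver_events_subset in blast)

lemma sets_history: "sets (history m) = sigma_sets (space M) (\<Union>k\<in>drivers_upto m. driver_events k)"
  unfolding history_def by (rule sets_measure_of) (use driver_events_subset in blast)

lemma subalgebra_history: "subalgebra M (history m)"
proof -
  have "drivers_upto m \<subseteq> driver_index"
    by (auto simp: drivers_upto_def driver_index_def)
  then have "sets (history m) \<subseteq> sets M"
    unfolding sets_history using driver_events_subset_sets by (intro sets.sigma_sets_subset) blast
  then show ?thesis
    unfolding subalgebra_def by simp
qed

lemma driver_events_in_history: "k \<in> drivers_upto m \<Longrightarrow> A \<in> driver_events k \<Longrightarrow> A \<in> sets (history m)"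
  unfolding sets_history by auto

lemma measurable_xi_history:
  assumes "i \<in> {1,2}" "2 \<le> n" "n \<le> m"
  shows "xi i n \<in> measurable (history m) (count_space UNIV)"
proof (rule measurableI)
  fix A
  have k: "(True, i, n) \<in> drivers_upto m" using assms by (auto simp: drivers_upto_def)
  have "xi i n -` A \<inter> space (history m) = driver (True, i, n) -` (Inl ` A) \<inter> space M"
    by (auto simp: driver_def)
  also have "\<dots> \<in> sets (history m)"
    by (rule driver_events_in_history[OF k]) (auto simp: driver_events_def)
  finally show "xi i n -` A \<inter> space (history m) \<in> sets (history m)" .
qed auto

lemma measurable_u_history:
  assumes "i \<in> {1,2}" "1 \<le> n" "n < m"
  shows "u i n \<in> measurable (history m) (count_space UNIV)"
proof (rule measurableI)
  fix A
  have k: "(False, i, n) \<in> drivers_upto m" using assms by (auto simp: drivers_upto_def)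
  have "u i n -` A \<inter> space (history m) = driver (False, i, n) -` (Inr ` A) \<inter> space M"
    by (auto simp: driver_def)
  also have "\<dots> \<in> sets (history m)"
    by (rule driver_events_in_history[OF k]) (auto simp: driver_events_def)
  finally show "u i n -` A \<inter> space (history m) \<in> sets (history m)" .
qed auto

lemma X_Suc_Suc:
  "X i (Suc (Suc k)) \<omega> = (2 * of_bool (xi i (Suc (Suc k)) \<omega>) - 1) *
     X (3 - i) (max 1 (min (u (3 - i) (Suc k) \<omega>) (Suc k))) \<omega>"
  by (simp add: X_def)

lemma abs_X_le_1: "i \<in> {1,2} \<Longrightarrow> \<bar>X i n \<omega>\<bar> \<le> 1"
  using abs_ew_eq_1[OF a, of i n] by (cases n) (auto simp: X_def)

lemma borel_measurable_X_if_drivers_measurable: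
  assumes xi: "\<And>i n. i \<in> {1,2} \<Longrightarrow> 2 \<le> n \<Longrightarrow> n \<le> m \<Longrightarrow> xi i n \<in> measurable N (count_space UNIV)"
    and u: "\<And>i n. i \<in> {1,2} \<Longrightarrow> 1 \<le> n \<Longrightarrow> n < m \<Longrightarrow> u i n \<in> measurable N (count_space UNIV)"
  shows "i \<in> {1,2} \<Longrightarrow> j \<le> m \<Longrightarrow> X i j \<in> borel_measurable N"
proof (induction j arbitrary: i rule: less_induct)
  case (less j)
  consider "j = 0" | "j = 1" | k where "j = Suc (Suc k)"
    by (metis One_nat_def not0_implies_Suc)
  then show ?case
  proof cases
    case 3
    have i': "3 - i \<in> {1,2}" using less by auto
    have "(\<lambda>\<omega>. X (3 - i) (max 1 (min c (Suc k))) \<omega>) \<in> borel_measurable N" for c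
      using less 3 i' by (intro less.IH) auto
    then have "(\<lambda>\<omega>. X (3 - i) (max 1 (min (u (3 - i) (Suc k) \<omega>) (Suc k))) \<omega>) \<in> borel_measurable N"
      by (rule measurable_compose_countable'[where I=UNIV]) (use u[OF i'] less 3 in auto)
    moreover have "(\<lambda>\<omega>. 2 * of_bool (xi i (Suc (Suc k)) \<omega>) - 1 :: real) \<in> borel_measurable N"
      by (rule measurable_compose[OF xi]) (use less 3 in auto)
    ultimately show ?thesis
      unfolding 3 X_Suc_Suc by simp
  qed (simp_all add: X_def)
qed

lemma borel_measurable_X: "i \<in> {1,2} \<Longrightarrow> X i j \<in> borel_measurable M"
  by (rule borel_measurable_X_if_drivers_measurable[of j]) (auto intro: measurable_xi measurable_u)

lemma borel_measurable_X_history: "i \<in> {1,2} \<Longrightarrow> j \<le> m \<Longrightarrow> X i j \<in> borel_measurable (history m)"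
  by (rule borel_measurable_X_if_drivers_measurable[of m])
    (auto intro: measurable_xi_history measurable_u_history)

lemma S_Suc: "S i (Suc m) \<omega> = S i m \<omega> + X i (Suc m) \<omega>"
  unfolding S_def by simp

lemma borel_measurable_S: "i \<in> {1,2} \<Longrightarrow> S i n \<in> borel_measurable M"
  unfolding S_def[abs_def] by (intro borel_measurable_sum borel_measurable_X)

lemma borel_measurable_S_history: "i \<in> {1,2} \<Longrightarrow> n \<le> m \<Longrightarrow> S i n \<in> borel_measurable (history m)"
  unfolding S_def[abs_def] by (intro borel_measurable_sum borel_measurable_X_history) auto

lemma abs_S_diff_le:
  assumes "i \<in> {1,2}" and "m \<le> n"
  shows "\<bar>S i n \<omega> - S i m \<omega>\<bar> \<le> real n - real m"
  using assms(2)
proof (induction n rule: dec_induct)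
  case (step n)
  then show ?case
    using abs_X_le_1[OF assms(1), of "Suc n" \<omega>] unfolding S_Suc by linarith
qed simp

lemma combination_average_eq_weighted_sum:
  "2 \<le> n \<Longrightarrow> (S 1 n \<omega> + c * S 2 n \<omega>) / n = 2 / (real n * (real n - 1)) *
     ((S 1 2 \<omega> + c * S 2 2 \<omega>) / 2 +
      (\<Sum>j=2..n-1. real j * ((X 1 (Suc j) \<omega> + c * X 2 (Suc j) \<omega> + (S 1 j \<omega> + c * S 2 j \<omega>) / j) / 2)))"
  by (rule average_eq_weighted_sum) (simp_all add: S_Suc algebra_simps)

lemma abs_S_le: "i \<in> {1,2} \<Longrightarrow> \<bar>S i n \<omega>\<bar> \<le> real n"
  using abs_S_diff_le[of i 0 n \<omega>] by (simp add: S_def)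


lemma space_F [simp]: "space (F n) = space M"
  unfolding F_def by (rule space_measure_of) auto

lemma sets_F:
  "sets (F n) = sigma_sets (space M)
     (\<Union>i\<in>{1,2}. \<Union>j\<in>{1..n}. {X i j -` A \<inter> space M | A. A \<in> sets borel})"
  unfolding F_def by (rule sets_measure_of) auto

lemma borel_measurable_X_F: "i \<in> {1,2} \<Longrightarrow> j \<le> n \<Longrightarrow> X i j \<in> borel_measurable (F n)"
proof (cases "j = 0")
  case True
  have "X i 0 = (\<lambda>_. 0)" by (rule ext) (simp add: X_def)
  with True show ?thesis by simp
next
  case False
  assume i: "i \<in> {1,2}" and j: "j \<le> n"
  show ?thesis
  proof (rule measurableI)
    fix A :: "real set" assume "A \<in> sets borel"
    moreover have "j \<in> {1..n}" using j False by auto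
    ultimately have "X i j -` A \<inter> space M \<in> (\<Union>i\<in>{1,2}. \<Union>j\<in>{1..n}. {X i j -` A \<inter> space M | A. A \<in> sets borel})"
      using i by blast
    then show "X i j -` A \<inter> space (F n) \<in> sets (F n)"
      unfolding sets_F by auto
  qed simp
qed

lemma sets_F_subset_history: "sets (F n) \<subseteq> sets (history n)"
proof -
  have "(\<Union>i\<in>{1,2}. \<Union>j\<in>{1..n}. {X i j -` A \<inter> space M | A. A \<in> sets borel}) \<subseteq> sets (history n)"
    using measurable_sets[OF borel_measurable_X_history] by auto
  then have "sigma_sets (space (history n))
      (\<Union>i\<in>{1,2}. \<Union>j\<in>{1..n}. {X i j -` A \<inter> space M | A. A \<in> sets borel}) \<subseteq> sets (history n)"
    by (subst sigma_sets_le_sets_iff)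
  then show ?thesis
    unfolding sets_F space_history .
qed

lemma subalgebra_F: "subalgebra M (F n)"
  using sets_F_subset_history subalgebra_history[of n] unfolding subalgebra_def by auto

lemma sets_F_mono: "sets (F n) \<subseteq> sets (F (Suc n))"
  unfolding sets_F by (intro sigma_sets_mono' UN_mono) auto

lemma borel_measurable_S_F: "i \<in> {1,2} \<Longrightarrow> S i n \<in> borel_measurable (F n)"
  unfolding S_def[abs_def] by (intro borel_measurable_sum borel_measurable_X_F) auto

lemma indep_choice_history:
  assumes i: "i \<in> {1,2}" and m: "1 \<le> m"
  shows "indep_set (sigma_sets (space M) (driver_events (False, i, m))) (sets (history m))"
proof -
  define K where "K = (\<lambda>b::bool. if b then {(False, i, m)} else drivers_upto m)"
  have "indep_sets driver_events driver_index"
    using indep_drivers unfolding indep_vars_def2 driver_events_def[abs_def] by blast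
  then have "indep_sets driver_events (\<Union>b. K b)"
    by (rule indep_sets_mono_index[rotated])
      (use i m in \<open>auto simp: K_def drivers_upto_def driver_index_def\<close>)
  then have "indep_sets (\<lambda>b. sigma_sets (space M) (\<Union>k\<in>K b. driver_events k)) UNIV"
  proof (rule indep_sets_collect_sigma)
    show "Int_stable (driver_events k)" for k
      unfolding Int_stable_def
    proof safe
      fix A B assume "A \<in> driver_events k" "B \<in> driver_events k"
      then obtain A' B' where "A = driver k -` A' \<inter> space M" "B = driver k -` B' \<inter> space M"
        unfolding driver_events_def by auto
      then have "A \<inter> B = driver k -` (A' \<inter> B') \<inter> space M" by auto
      moreover have "A' \<inter> B' \<in> sets (count_space UNIV)" by simp
      ultimately show "A \<inter> B \<in> driver_events k"
        unfolding driver_events_def by blast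
    qed
  qed (auto simp: disjoint_family_on_def K_def drivers_upto_def)
  moreover have "(\<lambda>b. sigma_sets (space M) (\<Union>k\<in>K b. driver_events k)) =
      case_bool (sigma_sets (space M) (driver_events (False, i, m))) (sets (history m))"
    by (rule ext) (auto simp: K_def sets_history split: bool.split)
  ultimately show ?thesis
    unfolding indep_set_def by simp
qed

lemma choice_event:
  "i \<in> {1,2} \<Longrightarrow> 1 \<le> m \<Longrightarrow> {\<omega>\<in>space M. clamp m (u i m \<omega>) = l} \<in> sets M"
  using measurable_sets[OF measurable_u, of i m "{k. clamp m k = l}"] by (simp add: Int_def conj_commute)

lemma prob_choice:
  assumes i: "i \<in> {1,2}" and m: "1 \<le> m" and l: "l \<in> {1..m}"
  shows "prob {\<omega>\<in>space M. clamp m (u i m \<omega>) = l} = 1 / real m"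
proof -
  have "{\<omega>\<in>space M. clamp m (u i m \<omega>) = l} = u i m -` {k. clamp m k = l} \<inter> space M"
    by auto
  then have "prob {\<omega>\<in>space M. clamp m (u i m \<omega>) = l}
      = measure (distr M (count_space UNIV) (u i m)) {k. clamp m k = l}"
    by (simp add: measure_distr[OF measurable_u[OF i m]])
  also have "\<dots> = measure (measure_pmf (pmf_of_set {1..m})) {k. clamp m k = l}"
  proof -
    have "distr M (count_space UNIV) (u i m) = measure_pmf (pmf_of_set {1..m})"
      using u_distr i m by blast
    then show ?thesis by simp
  qed
  also have "\<dots> = card ({1..m} \<inter> {k. clamp m k = l}) / card {1..m}"
    using m by (subst measure_pmf_of_set) auto
  also have "{1..m} \<inter> {k. clamp m k = l} = {l}"
    using l by auto
  finally show ?thesis by simp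
qed

lemma indep_var_choice_indicator:
  assumes i: "i \<in> {1,2}" and m: "1 \<le> m" and Z: "Z \<in> borel_measurable (history m)"
  shows "indep_var borel (indicator {\<omega>\<in>space M. clamp m (u i m \<omega>) = l} :: 'a \<Rightarrow> real) borel Z"
proof -
  define U :: "'a \<Rightarrow> real" where "U = indicator {\<omega>\<in>space M. clamp m (u i m \<omega>) = l}"
  have U_sets: "sigma_sets (space M) {U -` A \<inter> space M | A. A \<in> sets borel}
      \<subseteq> sigma_sets (space M) (driver_events (False, i, m))"
  proof (rule sigma_sets_mono')
    show "{U -` A \<inter> space M | A. A \<in> sets borel} \<subseteq> driver_events (False, i, m)"
    proof safe
      fix A :: "real set"
      have "U -` A \<inter> space M
          = driver (False, i, m) -` (Inr ` {k. indicator {l} (clamp m k) \<in> A}) \<inter> space M"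
        by (auto simp: U_def driver_def indicator_def image_iff split: if_splits)
      then show "U -` A \<inter> space M \<in> driver_events (False, i, m)"
        unfolding driver_events_def by auto
    qed
  qed
  have Z_sets: "sigma_sets (space M) {Z -` A \<inter> space M | A. A \<in> sets borel} \<subseteq> sets (history m)"
  proof -
    have "{Z -` A \<inter> space M | A. A \<in> sets borel} \<subseteq> sets (history m)"
      using measurable_sets[OF Z] by auto
    then show ?thesis
      using sigma_sets_le_sets_iff[of "history m"] by simp
  qed
  have "indep_var borel U borel Z"
    unfolding indep_var_eq indep_set_def
  proof (intro conjI)
    show "U \<in> borel_measurable M"
      unfolding U_def using choice_event[OF i m] by simp
    show "Z \<in> borel_measurable M"
      by (rule measurable_from_subalg[OF subalgebra_history Z])
    show "indep_sets (case_bool (sigma_sets (space M) {U -` A \<inter> space M | A. A \<in> sets borel})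
        (sigma_sets (space M) {Z -` A \<inter> space M | A. A \<in> sets borel})) UNIV"
      by (rule indep_sets_mono_sets[OF indep_choice_history[OF i m, unfolded indep_set_def]])
        (use U_sets Z_sets in \<open>auto split: bool.split\<close>)
  qed
  then show ?thesis
    unfolding U_def .
qed

lemma integral_choice_indicator_mult:
  assumes i: "i \<in> {1,2}" and m: "1 \<le> m" and l: "l \<in> {1..m}"
    and Z: "Z \<in> borel_measurable (history m)" and Z_bound: "\<And>\<omega>. \<omega> \<in> space M \<Longrightarrow> \<bar>Z \<omega>\<bar> \<le> K"
  shows "(\<integral>\<omega>. indicator {\<omega>\<in>space M. clamp m (u i m \<omega>) = l} \<omega> * Z \<omega> \<partial>M) = expectation Z / real m"
proof -
  have "integrable M (indicator {\<omega>\<in>space M. clamp m (u i m \<omega>) = l} :: 'a \<Rightarrow> real)"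
    using choice_event[OF i m] by (intro integrable_if_abs_bounded[where B=1]) (simp_all add: indicator_def)
  moreover have "integrable M Z"
    by (rule integrable_if_abs_bounded[OF measurable_from_subalg[OF subalgebra_history Z] Z_bound])
  ultimately show ?thesis
    using indep_var_lebesgue_integral[OF indep_var_choice_indicator[OF i m Z]]
      choice_event[OF i m] prob_choice[OF i m l] by simp
qed

end

text \<open>The case alpha_1 = alpha_2 = s of the paper: all coins equal s = 1 or all equal
  s = -1 almost surely, so each elephant copies or reverses a uniformly chosen past step
  of the other.\<close>
locale degenerate_two_elephant_walk = two_elephant_walk +
  fixes p :: "nat \<Rightarrow> real" and s :: real
  assumes s: "s = 1 \<or> s = -1"
    and xi_distr: "\<forall>i\<in>{1,2}. \<forall>n\<ge>2.
        distr M (count_space UNIV) (xi i n) = measure_pmf (bernoulli_pmf (p i))"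
    and p: "\<forall>i\<in>{1,2}. 2 * p i - 1 = s"
begin

lemma AE_xi:
  assumes i: "i \<in> {1,2}" and n: "2 \<le> n"
  shows "AE \<omega> in M. xi i n \<omega> = (s = 1)"
proof -
  have [measurable]: "xi i n \<in> measurable M (count_space UNIV)"
    by (rule measurable_xi[OF i n])
  have "emeasure M (xi i n -` {s \<noteq> 1} \<inter> space M)
      = emeasure (distr M (count_space UNIV) (xi i n)) {s \<noteq> 1}"
    by (simp add: emeasure_distr)
  also have "\<dots> = emeasure (measure_pmf (bernoulli_pmf (p i))) {s \<noteq> 1}"
  proof -
    have "distr M (count_space UNIV) (xi i n) = measure_pmf (bernoulli_pmf (p i))"
      using xi_distr i n by blast
    then show ?thesis by simp
  qed
  also have "\<dots> = 0"
    using p i s by (auto simp: emeasure_pmf_single)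
  finally show ?thesis
    by (subst AE_iff_measurable[of "xi i n -` {s \<noteq> 1} \<inter> space M"]) auto
qed

lemma AE_X_Suc_eq_sum:
  assumes i: "i \<in> {1,2}" and m: "1 \<le> m"
  shows "AE \<omega> in M. X i (Suc m) \<omega> =
    s * (\<Sum>l=1..m. indicator {\<omega>\<in>space M. clamp m (u (3 - i) m \<omega>) = l} \<omega> * X (3 - i) l \<omega>)"
proof -
  obtain k where k: "m = Suc k" using m by (cases m) auto
  have coin: "2 * of_bool (s = 1) - 1 = s" using s by auto
  have "2 \<le> Suc m" using m by simp
  from AE_xi[OF i this] AE_space show ?thesis
  proof eventually_elim
    case (elim \<omega>)
    let ?j = "clamp m (u (3 - i) m \<omega>)"
    have "X i (Suc m) \<omega> = s * X (3 - i) ?j \<omega>"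
      using elim(1) by (simp add: k X_Suc_Suc coin)
    also have "X (3 - i) ?j \<omega> = (\<Sum>l\<in>{1..m}. if ?j = l then X (3 - i) l \<omega> else 0)"
      using m by simp
    also have "\<dots> = (\<Sum>l=1..m. indicator {\<omega>\<in>space M. clamp m (u (3 - i) m \<omega>) = l} \<omega> * X (3 - i) l \<omega>)"
      using elim(2) by (intro sum.cong) (auto simp: indicator_def)
    finally show ?case .
  qed
qed

lemma integral_X_Suc_mult:
  assumes i: "i \<in> {1,2}" and m: "1 \<le> m" and Z: "Z \<in> borel_measurable (history m)"
    and Z_bound: "\<And>\<omega>. \<omega> \<in> space M \<Longrightarrow> \<bar>Z \<omega>\<bar> \<le> K"
  shows "(\<integral>\<omega>. X i (Suc m) \<omega> * Z \<omega> \<partial>M) = s / real m * (\<integral>\<omega>. S (3 - i) m \<omega> * Z \<omega> \<partial>M)"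
proof -
  let ?C = "\<lambda>l. {\<omega>\<in>space M. clamp m (u (3 - i) m \<omega>) = l}"
  let ?XZ = "\<lambda>l \<omega>. X (3 - i) l \<omega> * Z \<omega>"
  have i': "3 - i \<in> {1,2}" using i by auto
  have [measurable]: "Z \<in> borel_measurable M"
    by (rule measurable_from_subalg[OF subalgebra_history Z])
  have [measurable]: "X i l \<in> borel_measurable M" "X (3 - i) l \<in> borel_measurable M" for l
    using borel_measurable_X i i' by auto
  have C_sets [measurable]: "?C l \<in> sets M" for l
    by (rule choice_event[OF i' m])
  have XZ_bound: "\<bar>?XZ l \<omega>\<bar> \<le> K" if "\<omega> \<in> space M" for l \<omega>
    using abs_X_le_1[OF i', of l \<omega>] Z_bound[OF that]
    unfolding abs_mult by (metis abs_ge_zero mult_left_le_one_le order_trans)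
  have int_XZ: "integrable M (?XZ l)" for l
    by (rule integrable_if_abs_bounded[OF _ XZ_bound]) (use i' in simp)
  have int_CXZ: "integrable M (\<lambda>\<omega>. indicator (?C l) \<omega> * ?XZ l \<omega>)" for l
    using integrable_mult_indicator[OF C_sets int_XZ] by simp
  have "(\<integral>\<omega>. X i (Suc m) \<omega> * Z \<omega> \<partial>M) = (\<integral>\<omega>. s * (\<Sum>l=1..m. indicator (?C l) \<omega> * ?XZ l \<omega>) \<partial>M)"
  proof (rule integral_cong_AE)
    show "AE \<omega> in M. X i (Suc m) \<omega> * Z \<omega> = s * (\<Sum>l=1..m. indicator (?C l) \<omega> * ?XZ l \<omega>)"
      using AE_X_Suc_eq_sum[OF i m] by eventually_elim (simp add: sum_distrib_right mult.assoc)
  qed measurable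
  also have "\<dots> = s * (\<Sum>l=1..m. \<integral>\<omega>. indicator (?C l) \<omega> * ?XZ l \<omega> \<partial>M)"
    by (simp only: integral_mult_right_zero Bochner_Integration.integral_sum[OF int_CXZ])
  also have "\<dots> = s * (\<Sum>l=1..m. expectation (?XZ l) / real m)"
  proof (intro arg_cong[where f="\<lambda>x. s * x"] sum.cong refl)
    fix l assume l: "l \<in> {1..m}"
    then have "?XZ l \<in> borel_measurable (history m)"
      by (intro borel_measurable_times borel_measurable_X_history[OF i'] Z) simp
    then show "(\<integral>\<omega>. indicator (?C l) \<omega> * ?XZ l \<omega> \<partial>M) = expectation (?XZ l) / real m"
      by (rule integral_choice_indicator_mult[OF i' m l _ XZ_bound])
  qed
  also have "\<dots> = s / real m * expectation (\<lambda>\<omega>. \<Sum>l=1..m. ?XZ l \<omega>)"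
    using int_XZ by (simp add: sum_distrib_left)
  also have "(\<lambda>\<omega>. \<Sum>l=1..m. ?XZ l \<omega>) = (\<lambda>\<omega>. S (3 - i) m \<omega> * Z \<omega>)"
    by (simp add: S_def sum_distrib_right)
  finally show ?thesis .
qed

definition W :: "nat \<Rightarrow> 'a \<Rightarrow> real" where
  "W n \<omega> = (S 1 n \<omega> + s * S 2 n \<omega>) / real n"

lemma abs_combination_diff_le:
  assumes "m \<le> n"
  shows "\<bar>(S 1 n \<omega> + s * S 2 n \<omega>) - (S 1 m \<omega> + s * S 2 m \<omega>)\<bar> \<le> 2 * (real n - real m)"
proof -
  have "\<bar>(S 1 n \<omega> + s * S 2 n \<omega>) - (S 1 m \<omega> + s * S 2 m \<omega>)\<bar>
      \<le> \<bar>S 1 n \<omega> - S 1 m \<omega>\<bar> + \<bar>s\<bar> * \<bar>S 2 n \<omega> - S 2 m \<omega>\<bar>"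
    by (simp add: algebra_simps abs_mult[symmetric] abs_triangle_ineq[THEN order_trans, OF eq_refl])
  then show ?thesis
    using abs_S_diff_le[OF _ assms, of 1 \<omega>] abs_S_diff_le[OF _ assms, of 2 \<omega>] s by auto
qed

lemma abs_W_le_2: "\<bar>W n \<omega>\<bar> \<le> 2"
  using abs_combination_diff_le[of 0 n \<omega>] by (simp add: W_def S_def divide_le_eq)

lemma abs_W_diff_le:
  assumes "1 \<le> m" "m \<le> n"
  shows "\<bar>W n \<omega> - W m \<omega>\<bar> \<le> 4 * (real n - real m) / real m"
  using abs_average_diff_le[OF assms, of "\<lambda>k. S 1 k \<omega> + s * S 2 k \<omega>" 2]
    abs_combination_diff_le[of 0 m \<omega>] abs_combination_diff_le[OF assms(2), of \<omega>]
  by (simp add: W_def S_def)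

lemma borel_measurable_W_history: "n \<le> m \<Longrightarrow> W n \<in> borel_measurable (history m)"
  unfolding W_def[abs_def] using borel_measurable_S_history[of 1 n m] borel_measurable_S_history[of 2 n m]
  by measurable

lemma borel_measurable_W_F: "W n \<in> borel_measurable (F n)"
  unfolding W_def[abs_def] using borel_measurable_S_F[of 1 n] borel_measurable_S_F[of 2 n]
  by measurable

lemma integral_W_Suc_mult:
  assumes m: "1 \<le> m" and Z: "Z \<in> borel_measurable (history m)"
    and Z_bound: "\<And>\<omega>. \<omega> \<in> space M \<Longrightarrow> \<bar>Z \<omega>\<bar> \<le> K"
  shows "(\<integral>\<omega>. W (Suc m) \<omega> * Z \<omega> \<partial>M) = (\<integral>\<omega>. W m \<omega> * Z \<omega> \<partial>M)"
proof -
  have ZM: "Z \<in> borel_measurable M"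
    by (rule measurable_from_subalg[OF subalgebra_history Z])
  have int_SZ: "integrable M (\<lambda>\<omega>. S i m \<omega> * Z \<omega>)" if "i \<in> {1,2}" for i
    using abs_S_le[OF that]
    by (intro integrable_mult_if_abs_bounded[OF borel_measurable_S[OF that] ZM _ Z_bound])
  have int_XZ: "integrable M (\<lambda>\<omega>. X i (Suc m) \<omega> * Z \<omega>)" if "i \<in> {1,2}" for i
    using abs_X_le_1[OF that]
    by (intro integrable_mult_if_abs_bounded[OF borel_measurable_X[OF that] ZM _ Z_bound])
  note ints = int_SZ[of 1] int_SZ[of 2] int_XZ[of 1] int_XZ[of 2]
  define A where "A = (\<integral>\<omega>. S 1 m \<omega> * Z \<omega> \<partial>M)"
  define B where "B = (\<integral>\<omega>. S 2 m \<omega> * Z \<omega> \<partial>M)"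
  have X1: "(\<integral>\<omega>. X 1 (Suc m) \<omega> * Z \<omega> \<partial>M) = s / real m * B"
    using integral_X_Suc_mult[of 1 m Z K] m Z Z_bound by (simp add: B_def)
  have X2: "(\<integral>\<omega>. X 2 (Suc m) \<omega> * Z \<omega> \<partial>M) = s / real m * A"
    using integral_X_Suc_mult[of 2 m Z K] m Z Z_bound by (simp add: A_def)
  have "(\<lambda>\<omega>. W (Suc m) \<omega> * Z \<omega>) = (\<lambda>\<omega>. (S 1 m \<omega> * Z \<omega> + X 1 (Suc m) \<omega> * Z \<omega>
      + s * (S 2 m \<omega> * Z \<omega> + X 2 (Suc m) \<omega> * Z \<omega>)) / real (Suc m))"
    by (rule ext) (simp add: W_def S_Suc field_simps)
  then have "(\<integral>\<omega>. W (Suc m) \<omega> * Z \<omega> \<partial>M) = (A + (\<integral>\<omega>. X 1 (Suc m) \<omega> * Z \<omega> \<partial>M)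
      + s * (B + (\<integral>\<omega>. X 2 (Suc m) \<omega> * Z \<omega> \<partial>M))) / real (Suc m)"
    unfolding A_def B_def using ints by simp
  also have "\<dots> = (A + s * B) / real m"
  proof -
    have "s * (s / real m * A) = A / real m" using s by auto
    then have "A + s / real m * B + s * (B + s / real m * A) = (A + s * B) * (real (Suc m) / real m)"
      using m unfolding distrib_left by (simp add: field_simps)
    then show ?thesis unfolding X1 X2 by simp
  qed
  also have "\<dots> = (\<integral>\<omega>. W m \<omega> * Z \<omega> \<partial>M)"
  proof -
    have "(\<lambda>\<omega>. W m \<omega> * Z \<omega>) = (\<lambda>\<omega>. (S 1 m \<omega> * Z \<omega> + s * (S 2 m \<omega> * Z \<omega>)) / real m)"
      by (rule ext) (simp add: W_def field_simps)
    then show ?thesis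
      unfolding A_def B_def using ints by simp
  qed
  finally show ?thesis .
qed

lemma martingale_W: "martingale_wrt M F W"
  unfolding martingale_wrt_def
proof (intro allI impI conjI)
  fix n :: nat assume n: "1 \<le> n"
  show "subalgebra M (F n)" by (rule subalgebra_F)
  show "sets (F n) \<subseteq> sets (F (Suc n))" by (rule sets_F_mono)
  show W_F: "W n \<in> borel_measurable (F n)" by (rule borel_measurable_W_F)
  have W_M: "W k \<in> borel_measurable M" for k
    by (rule measurable_from_subalg[OF subalgebra_F borel_measurable_W_F])
  have int_W: "integrable M (W k)" for k
    by (rule integrable_if_abs_bounded[OF W_M abs_W_le_2])
  then show "integrable M (W n)" .
  interpret F: finite_measure_subalgebra M "F n"
    by unfold_locales (rule subalgebra_F)
  show "AE \<omega> in M. real_cond_exp M (F n) (W (Suc n)) \<omega> = W n \<omega>"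
  proof (rule F.real_cond_exp_charact[OF _ int_W int_W W_F])
    fix A assume "A \<in> sets (F n)"
    then have "A \<in> sets (history n)"
      using sets_F_subset_history by blast
    then have "indicator A \<in> borel_measurable (history n)"
      by simp
    then have "(\<integral>\<omega>. W (Suc n) \<omega> * indicator A \<omega> \<partial>M) = (\<integral>\<omega>. W n \<omega> * indicator A \<omega> \<partial>M)"
      by (rule integral_W_Suc_mult[OF n, where K=1]) (simp add: indicator_def)
    then show "(\<integral>\<omega>\<in>A. W (Suc n) \<omega> \<partial>M) = (\<integral>\<omega>\<in>A. W n \<omega> \<partial>M)"
      unfolding set_lebesgue_integral_def by (simp add: mult.commute)
  qed
qed

lemma AE_convergent_W: "AE \<omega> in M. convergent (\<lambda>n. W n \<omega>)"
proof -
  interpret orthogonal_slow_increments M W history 2 4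
  proof unfold_locales
    fix m and Z :: "'a \<Rightarrow> real" and K :: real
    assume "1 \<le> m" "Z \<in> borel_measurable (history m)" "\<And>\<omega>. \<omega> \<in> space M \<Longrightarrow> \<bar>Z \<omega>\<bar> \<le> K"
    then show "expectation (\<lambda>\<omega>. W (Suc m) \<omega> * Z \<omega>) = expectation (\<lambda>\<omega>. W m \<omega> * Z \<omega>)"
      by (rule integral_W_Suc_mult)
  next
    fix m n :: nat and \<omega> assume "1 \<le> m" "m \<le> n"
    then show "\<bar>W n \<omega> - W m \<omega>\<bar> \<le> 4 * (real n - real m) / real m"
      by (rule abs_W_diff_le)
  qed (simp_all add: subalgebra_history borel_measurable_W_history abs_W_le_2)
  show ?thesis
    by (rule AE_convergent)
qed

lemma bounded_convergent_martingale_and_weighted_sum: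
  fixes z z' e :: "nat \<Rightarrow> 'a \<Rightarrow> real" and beta :: "nat \<Rightarrow> real"
  assumes z: "\<And>n \<omega>. z n \<omega> = (S 1 n \<omega> + s * S 2 n \<omega>) / real n"
    and z': "\<And>n \<omega>. z' n \<omega> = (S 1 n \<omega> - s * S 2 n \<omega>) / real n"
    and e: "\<And>j \<omega>. e (Suc j) \<omega> = (X 1 (Suc j) \<omega> - s * X 2 (Suc j) \<omega> + z' j \<omega>) / 2"
    and beta: "\<And>n. beta n = 2 / (real n * (real n - 1))"
  shows "martingale_wrt M F z \<and> (\<exists>B. \<forall>n\<ge>1. \<forall>\<omega>\<in>space M. \<bar>z n \<omega>\<bar> \<le> B) \<and>
    (AE \<omega> in M. convergent (\<lambda>n. z n \<omega>)) \<and>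
    (\<forall>n\<ge>2. \<forall>\<omega>\<in>space M. z' n \<omega> = beta n * (z' 2 \<omega> + (\<Sum>j=2..n-1. real j * e (Suc j) \<omega>)))"
proof -
  have "z = W"
    by (simp add: fun_eq_iff z W_def)
  moreover have "z' n \<omega> = beta n * (z' 2 \<omega> + (\<Sum>j=2..n-1. real j * e (Suc j) \<omega>))" if "2 \<le> n" for n \<omega>
    using combination_average_eq_weighted_sum[OF that, of \<omega> "-s"] by (simp add: z' e beta)
  ultimately show ?thesis
    using martingale_W abs_W_le_2 AE_convergent_W by blast
qed

end

theorem lemma3p3:
  fixes M :: "'a measure" and p :: "nat \<Rightarrow> real"
    and xi :: "nat \<Rightarrow> nat \<Rightarrow> 'a \<Rightarrow> bool" and u :: "nat \<Rightarrow> nat \<Rightarrow> 'a \<Rightarrow> nat"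
    and a :: "nat \<Rightarrow> real"
    and X :: "nat \<Rightarrow> nat \<Rightarrow> 'a \<Rightarrow> real" and S :: "nat \<Rightarrow> nat \<Rightarrow> 'a \<Rightarrow> real"
    and F :: "nat \<Rightarrow> 'a measure"
    and x y eps_x eps_y :: "nat \<Rightarrow> 'a \<Rightarrow> real"
    and beta :: "nat \<Rightarrow> real"
  assumes M: "prob_space M"
    and p: "\<forall>i\<in>{1,2}. 0 \<le> p i \<and> p i \<le> 1"
    and a: "\<forall>i\<in>{1,2}. a i \<in> {-1, 1}"
    and indep: "prob_space.indep_vars M (\<lambda>_. count_space UNIV)
        (\<lambda>k \<omega>. case k of (True, i, n) \<Rightarrow> Inl (xi i n \<omega>) | (False, i, n) \<Rightarrow> Inr (u i n \<omega>))
        (({True} \<times> {1,2} \<times> {2..}) \<union> ({False} \<times> {1,2} \<times> {1..}))"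
    and xi_distr: "\<forall>i\<in>{1,2}. \<forall>n\<ge>2.
        distr M (count_space UNIV) (xi i n) = measure_pmf (bernoulli_pmf (p i))"
    and u_distr: "\<forall>i\<in>{1,2}. \<forall>n\<ge>1.
        distr M (count_space UNIV) (u i n) = measure_pmf (pmf_of_set {1..n})"
    and X_def: "\<And>i n \<omega>. X i n \<omega> = ew (\<lambda>i n. xi i n \<omega>) (\<lambda>i n. u i n \<omega>) a i n"
    and S_def: "\<And>i n \<omega>. S i n \<omega> = (\<Sum>k=1..n. X i k \<omega>)"
    and F_def: "\<And>n. F n = sigma (space M)
        (\<Union>i\<in>{1,2}. \<Union>j\<in>{1..n}. {X i j -` A \<inter> space M | A. A \<in> sets borel})"
    and x_def: "\<And>n \<omega>. x n \<omega> =
        (S 1 n \<omega> - r_alpha (2 * p 1 - 1) (2 * p 2 - 1) * S 2 n \<omega>) / real n"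
    and y_def: "\<And>n \<omega>. y n \<omega> =
        (S 1 n \<omega> + r_alpha (2 * p 1 - 1) (2 * p 2 - 1) * S 2 n \<omega>) / real n"
    and eps_x_def: "\<And>j \<omega>. eps_x (Suc j) \<omega> =
        1 / (1 + lam_alpha (2 * p 1 - 1) (2 * p 2 - 1)) *
        (X 1 (Suc j) \<omega> - r_alpha (2 * p 1 - 1) (2 * p 2 - 1) * X 2 (Suc j) \<omega>
          + lam_alpha (2 * p 1 - 1) (2 * p 2 - 1) * x j \<omega>)"
    and eps_y_def: "\<And>j \<omega>. eps_y (Suc j) \<omega> =
        1 / (1 - lam_alpha (2 * p 1 - 1) (2 * p 2 - 1)) *
        (X 1 (Suc j) \<omega> + r_alpha (2 * p 1 - 1) (2 * p 2 - 1) * X 2 (Suc j) \<omega>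
          - lam_alpha (2 * p 1 - 1) (2 * p 2 - 1) * y j \<omega>)"
    and beta_def: "\<And>n. beta n = 2 / (real n * (real n - 1))"
  shows
    "(2 * p 1 - 1 = -1 \<and> 2 * p 2 - 1 = -1 \<longrightarrow>
        martingale_wrt M F x
      \<and> (\<exists>B. \<forall>n\<ge>1. \<forall>\<omega>\<in>space M. \<bar>x n \<omega>\<bar> \<le> B)
      \<and> (AE \<omega> in M. convergent (\<lambda>n. x n \<omega>))
      \<and> (\<forall>n\<ge>2. \<forall>\<omega>\<in>space M.
            y n \<omega> = beta n * (y 2 \<omega> + (\<Sum>j=2..n-1. real j * eps_y (Suc j) \<omega>))))
   \<and> (2 * p 1 - 1 = 1 \<and> 2 * p 2 - 1 = 1 \<longrightarrow>
        martingale_wrt M F y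
      \<and> (\<exists>B. \<forall>n\<ge>1. \<forall>\<omega>\<in>space M. \<bar>y n \<omega>\<bar> \<le> B)
      \<and> (AE \<omega> in M. convergent (\<lambda>n. y n \<omega>))
      \<and> (\<forall>n\<ge>2. \<forall>\<omega>\<in>space M.
            x n \<omega> = beta n * (x 2 \<omega> + (\<Sum>j=2..n-1. real j * eps_x (Suc j) \<omega>))))"
proof -
  have walk: "two_elephant_walk M xi u a X S F"
    by (intro two_elephant_walk.intro[OF M] two_elephant_walk_axioms.intro
        a indep u_distr X_def S_def F_def)
  have degenerate: "degenerate_two_elephant_walk M xi u a X S F p s"
    if "2 * p 1 - 1 = s" "2 * p 2 - 1 = s" "s = 1 \<or> s = -1" for s
    using walk xi_distr that
    by (simp add: degenerate_two_elephant_walk_def degenerate_two_elephant_walk_axioms_def)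
  show ?thesis
  proof (rule conjI; rule impI)
    assume h: "2 * p 1 - 1 = -1 \<and> 2 * p 2 - 1 = -1"
    then interpret degenerate_two_elephant_walk M xi u a X S F p "-1"
      using degenerate by auto
    from h have "r_alpha (2 * p 1 - 1) (2 * p 2 - 1) = 1"
      and "lam_alpha (2 * p 1 - 1) (2 * p 2 - 1) = -1"
      by (simp_all add: r_alpha_def lam_alpha_def)
    then show "martingale_wrt M F x \<and> (\<exists>B. \<forall>n\<ge>1. \<forall>\<omega>\<in>space M. \<bar>x n \<omega>\<bar> \<le> B) \<and>
        (AE \<omega> in M. convergent (\<lambda>n. x n \<omega>)) \<and>
        (\<forall>n\<ge>2. \<forall>\<omega>\<in>space M. y n \<omega> = beta n * (y 2 \<omega> + (\<Sum>j=2..n-1. real j * eps_y (Suc j) \<omega>)))"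
      by (intro bounded_convergent_martingale_and_weighted_sum)
        (simp_all add: x_def y_def eps_y_def beta_def diff_divide_distrib add_divide_distrib)
  next
    assume h: "2 * p 1 - 1 = 1 \<and> 2 * p 2 - 1 = 1"
    then interpret degenerate_two_elephant_walk M xi u a X S F p 1
      using degenerate by auto
    from h have "r_alpha (2 * p 1 - 1) (2 * p 2 - 1) = 1"
      and "lam_alpha (2 * p 1 - 1) (2 * p 2 - 1) = 1"
      by (simp_all add: r_alpha_def lam_alpha_def)
    then show "martingale_wrt M F y \<and> (\<exists>B. \<forall>n\<ge>1. \<forall>\<omega>\<in>space M. \<bar>y n \<omega>\<bar> \<le> B) \<and>
        (AE \<omega> in M. convergent (\<lambda>n. y n \<omega>)) \<and>
        (\<forall>n\<ge>2. \<forall>\<omega>\<in>space M. x n \<omega> = beta n * (x 2 \<omega> + (\<Sum>j=2..n-1. real j * eps_x (Suc j) \<omega>)))"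
      by (intro bounded_convergent_martingale_and_weighted_sum)
        (simp_all add: x_def y_def eps_x_def beta_def)
  qed
qed

end
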